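(* Let $q>2$, $n\ge 2$, and let $f:H(n,q)\to\mathbb{R}$ be an eigenfunction of $H(n,q)$ with eigenvalue $\lambda_1=n(q-1)-q$, i.e. $f\not\equiv0$ and $Af=\lambda_1 f$ where $A$ is the adjacency matrix of $H(n,q)$. Then $|S(f)|\ge 2(q-1)q^{n-2}$. Moreover, if $|S(f)|=2(q-1)q^{n-2}$, then there exist $i\ne j$ in $\{1,\dots,n\}$, $k,m\in\{0,\dots,q-1\}$ and a constant $c\ne0$ such that $f(x)=c$ for $x\in T_k(i,n)\setminus T_m(j,n)$, $f(x)=-c$ for $x\in T_m(j,n)\setminus T_k(i,n)$, and $f(x)=0$ otherwise.
   Context: The Hamming graph $H(n,q)$ has vertex set $\{0,1,\dots,q-1\}^n$, two words being adjacent iff they differ in exactly one coordinate; its adjacency eigenvalues are $\lambda_m=n(q-1)-qm$, $m=0,\dots,n$. For $f:H(n,q)\to\mathbb{R}$, its support is $S(f)=\{x: f(x)\ne 0\}$. $T_k(i,n)$ denotes the set of vertices of $H(n,q)$ whose $i$-th coordinate equals $k$. *)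

theory Defs
  imports "HOL-Analysis.Analysis"
begin

text \<open>Vertex set of the Hamming graph H(n,q): words of length n over {0,...,q-1},
  represented as functions nat => nat that are zero outside the coordinates {0..<n}
  (coordinates are indexed 0,...,n-1 instead of 1,...,n).\<close>
definition hamming_vertices :: "nat \<Rightarrow> nat \<Rightarrow> (nat \<Rightarrow> nat) set" where
  "hamming_vertices n q = {x. (\<forall>i<n. x i < q) \<and> (\<forall>i\<ge>n. x i = 0)}"

definition hamming_adj :: "nat \<Rightarrow> (nat \<Rightarrow> nat) \<Rightarrow> (nat \<Rightarrow> nat) \<Rightarrow> bool" where
  "hamming_adj n x y = (card {i\<in>{0..<n}. x i \<noteq> y i} = 1)"

definition hamming_adj_op :: "nat \<Rightarrow> nat \<Rightarrow> ((nat \<Rightarrow> nat) \<Rightarrow> real) \<Rightarrow> (nat \<Rightarrow> nat) \<Rightarrow> real" where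
  "hamming_adj_op n q f x = (\<Sum>y\<in>{y\<in>hamming_vertices n q. hamming_adj n x y}. f y)"

definition support_H :: "nat \<Rightarrow> nat \<Rightarrow> ((nat \<Rightarrow> nat) \<Rightarrow> real) \<Rightarrow> (nat \<Rightarrow> nat) set" where
  "support_H n q f = {x\<in>hamming_vertices n q. f x \<noteq> 0}"

definition T_set :: "nat \<Rightarrow> nat \<Rightarrow> nat \<Rightarrow> nat \<Rightarrow> (nat \<Rightarrow> nat) set" where
  "T_set q k i n = {x\<in>hamming_vertices n q. x i = k}"

end

theory Submission
  imports Defs
begin

text \<open>Slicing along the last coordinate turns an eigenfunction of \<open>H(n+1,q)\<close> with eigenvalue
  \<open>\<mu>\<close> into eigenfunctions of \<open>H(n,q)\<close>: differences of two slices have eigenvalue \<open>\<mu> + 1\<close> and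
  the sum of all slices has eigenvalue \<open>\<mu> + 1 - q\<close>. Since nothing lies above the top eigenvalue
  \<open>n(q - 1)\<close>, induction shows that every \<open>\<lambda>\<^sub>1\<close>-eigenfunction is a sum
  \<open>f x = \<Sum>\<^sub>i g\<^sub>i (x\<^sub>i)\<close> with every \<open>g\<^sub>i\<close> summing to zero.

  If two of the \<open>g\<^sub>i\<close>, say \<open>u = g\<^sub>i\<close> and \<open>v = g\<^sub>j\<close>, are nonzero, then on each of the
  \<open>q^(n - 2)\<close> planes obtained by freeing coordinates \<open>i\<close> and \<open>j\<close> the function reads
  \<open>u a + v b + const\<close>, and such a \<open>q \<times> q\<close> table has at least \<open>2(q - 1)\<close> nonzero entries, with
  equality only when \<open>u\<close> and \<open>v\<close> are constant off a single point and the constant term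
  vanishes.
  If only one \<open>g\<^sub>i\<close> is nonzero, the support is a union of at least two of the sets
  \<open>T\<^sub>k(i,n)\<close> and is larger still.\<close>

section \<open>Vertices and adjacency of \<open>H(n+1,q)\<close> in terms of \<open>H(n,q)\<close>\<close>

lemma mem_hamming_vertices:
  "x \<in> hamming_vertices n q \<longleftrightarrow> (\<forall>i<n. x i < q) \<and> (\<forall>i\<ge>n. x i = 0)"
  unfolding hamming_vertices_def by simp

lemma hamming_vertices_0: "hamming_vertices 0 q = {\<lambda>_. 0}"
  unfolding hamming_vertices_def by auto

lemma fun_upd_in_hamming_vertices_Suc:
  "y \<in> hamming_vertices n q \<Longrightarrow> a < q \<Longrightarrow> y(n := a) \<in> hamming_vertices (Suc n) q"
  unfolding mem_hamming_vertices by (auto simp: less_Suc_eq)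

lemma hamming_vertices_Suc_D:
  assumes "x \<in> hamming_vertices (Suc n) q"
  shows "x(n := 0) \<in> hamming_vertices n q" and "x n < q"
  using assms unfolding mem_hamming_vertices by (auto simp: le_Suc_eq)

lemma hamming_vertices_Suc:
  "hamming_vertices (Suc n) q = (\<lambda>(y, a). y(n := a)) ` (hamming_vertices n q \<times> {..<q})"
proof (intro equalityI subsetI)
  fix x assume "x \<in> hamming_vertices (Suc n) q"
  then have "(x(n := 0), x n) \<in> hamming_vertices n q \<times> {..<q}"
    using hamming_vertices_Suc_D by auto
  moreover have "x = (\<lambda>(y, a). y(n := a)) (x(n := 0), x n)" by simp
  ultimately show "x \<in> (\<lambda>(y, a). y(n := a)) ` (hamming_vertices n q \<times> {..<q})" by blast
qed (auto intro: fun_upd_in_hamming_vertices_Suc)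

lemma inj_on_fun_upd_hamming_vertices:
  "inj_on (\<lambda>(y, a). y(n := a)) (hamming_vertices n q \<times> UNIV)"
proof (rule inj_onI, clarsimp)
  fix y a z b
  assume "y \<in> hamming_vertices n q" "z \<in> hamming_vertices n q" and eq: "y(n := a) = z(n := b)"
  then have "\<forall>i. y i = z i"
    unfolding mem_hamming_vertices by (metis fun_upd_other order_refl)
  then show "y = z \<and> a = b" using fun_cong[OF eq, of n] by auto
qed

lemma finite_card_hamming_vertices:
  "finite (hamming_vertices n q) \<and> card (hamming_vertices n q) = q ^ n"
proof (induction n)
  case 0
  then show ?case by (simp add: hamming_vertices_0)
next
  case (Suc n)
  have "inj_on (\<lambda>(y, a). y(n := a)) (hamming_vertices n q \<times> {..<q})"
    using inj_on_fun_upd_hamming_vertices by (rule inj_on_subset) auto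
  with Suc show ?case
    unfolding hamming_vertices_Suc by (simp add: card_image card_cartesian_product)
qed

lemma finite_hamming_vertices: "finite (hamming_vertices n q)"
  using finite_card_hamming_vertices by blast

lemma card_hamming_vertices: "card (hamming_vertices n q) = q ^ n"
  using finite_card_hamming_vertices by blast

lemma hamming_adj_fun_upd_Suc:
  assumes y: "y \<in> hamming_vertices n q" and z: "z \<in> hamming_vertices n q"
  shows "hamming_adj (Suc n) (y(n := a)) (z(n := b)) \<longleftrightarrow>
    (a = b \<and> hamming_adj n y z) \<or> (a \<noteq> b \<and> y = z)"
proof -
  let ?D = "{i\<in>{0..<n}. y i \<noteq> z i}"
  have "{i\<in>{0..<Suc n}. (y(n := a)) i \<noteq> (z(n := b)) i} = ?D \<union> (if a = b then {} else {n})"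
    by auto
  then have card: "card {i\<in>{0..<Suc n}. (y(n := a)) i \<noteq> (z(n := b)) i} =
      card ?D + (if a = b then 0 else 1)"
    by (simp add: card_insert_if)
  have "y = z \<longleftrightarrow> ?D = {}"
    using y z unfolding mem_hamming_vertices by (auto intro!: ext) (metis not_le)
  then show ?thesis
    unfolding hamming_adj_def card using finite_atLeastLessThan by auto
qed

lemma hamming_neighbours_Suc:
  assumes y: "y \<in> hamming_vertices n q" and a: "a < q"
  shows "{x\<in>hamming_vertices (Suc n) q. hamming_adj (Suc n) (y(n := a)) x} =
    (\<lambda>z. z(n := a)) ` {z\<in>hamming_vertices n q. hamming_adj n y z} \<union>
    (\<lambda>b. y(n := b)) ` ({..<q} - {a})"
    (is "?N = ?A \<union> ?B")
proof (intro equalityI subsetI)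
  fix x assume x: "x \<in> ?N"
  then have z: "x(n := 0) \<in> hamming_vertices n q" and xn: "x n < q"
    using hamming_vertices_Suc_D by auto
  have "(a = x n \<and> hamming_adj n y (x(n := 0))) \<or> (a \<noteq> x n \<and> y = x(n := 0))"
    using hamming_adj_fun_upd_Suc[OF y z, of a "x n"] x by simp
  then show "x \<in> ?A \<union> ?B"
  proof
    assume "a = x n \<and> hamming_adj n y (x(n := 0))"
    then show ?thesis using z by (auto intro!: image_eqI[of _ _ "x(n := 0)"])
  next
    assume "a \<noteq> x n \<and> y = x(n := 0)"
    then show ?thesis using xn by (auto intro!: image_eqI[of _ _ "x n"])
  qed
qed (use hamming_adj_fun_upd_Suc[OF y] hamming_adj_fun_upd_Suc[OF y y]
       fun_upd_in_hamming_vertices_Suc[OF y] fun_upd_in_hamming_vertices_Suc a in auto)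

lemma hamming_adj_op_Suc:
  assumes y: "y \<in> hamming_vertices n q" and a: "a < q"
  shows "hamming_adj_op (Suc n) q f (y(n := a)) =
    hamming_adj_op n q (\<lambda>z. f (z(n := a))) y + (\<Sum>b<q. f (y(n := b))) - f (y(n := a))"
proof -
  let ?A = "(\<lambda>z. z(n := a)) ` {z\<in>hamming_vertices n q. hamming_adj n y z}"
  let ?B = "(\<lambda>b. y(n := b)) ` ({..<q} - {a})"
  have disjoint: "?A \<inter> ?B = {}"
    by (auto dest: fun_cong[of _ _ n])
  have inj_A: "inj_on (\<lambda>z. z(n := a)) {z\<in>hamming_vertices n q. hamming_adj n y z}"
    using inj_on_fun_upd_hamming_vertices[of n q] by (auto simp: inj_on_def)
  have inj_B: "inj_on (\<lambda>b. y(n := b)) ({..<q} - {a})"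
    by (rule inj_onI) (metis fun_upd_same)
  have "hamming_adj_op (Suc n) q f (y(n := a)) = sum f ?A + sum f ?B"
    unfolding hamming_adj_op_def hamming_neighbours_Suc[OF y a]
    using finite_hamming_vertices disjoint by (intro sum.union_disjoint) auto
  also have "sum f ?A = hamming_adj_op n q (\<lambda>z. f (z(n := a))) y"
    unfolding hamming_adj_op_def by (simp add: sum.reindex[OF inj_A])
  also have "sum f ?B = (\<Sum>b<q. f (y(n := b))) - f (y(n := a))"
    using a by (simp add: sum.reindex[OF inj_B] sum_diff1)
  finally show ?thesis by (simp only: add_diff_eq)
qed

section \<open>Eigenfunctions and their slices\<close>

definition hamming_eigen :: "nat \<Rightarrow> nat \<Rightarrow> real \<Rightarrow> ((nat \<Rightarrow> nat) \<Rightarrow> real) \<Rightarrow> bool" where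
  "hamming_eigen n q \<mu> f \<longleftrightarrow>
    (\<forall>x\<in>hamming_vertices n q. hamming_adj_op n q f x = \<mu> * f x)"

lemma hamming_eigen_cong:
  assumes "hamming_eigen n q \<mu> f" and "\<And>x. x \<in> hamming_vertices n q \<Longrightarrow> f x = g x"
  shows "hamming_eigen n q \<mu> g"
  using assms unfolding hamming_eigen_def hamming_adj_op_def by simp

lemma hamming_eigen_scale:
  "hamming_eigen n q \<mu> f \<Longrightarrow> hamming_eigen n q \<mu> (\<lambda>x. c * f x)"
  unfolding hamming_eigen_def hamming_adj_op_def by (simp flip: sum_distrib_left)

lemma hamming_eigen_slice:
  assumes "hamming_eigen (Suc n) q \<mu> f" "y \<in> hamming_vertices n q" "a < q"
  shows "hamming_adj_op n q (\<lambda>z. f (z(n := a))) y =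
    (\<mu> + 1) * f (y(n := a)) - (\<Sum>b<q. f (y(n := b)))"
proof -
  have "hamming_adj_op (Suc n) q f (y(n := a)) = \<mu> * f (y(n := a))"
    using assms(1) fun_upd_in_hamming_vertices_Suc[OF assms(2,3)] unfolding hamming_eigen_def by blast
  then show ?thesis
    using hamming_adj_op_Suc[OF assms(2,3), of f] by (simp add: algebra_simps)
qed

lemma hamming_eigen_slice_diff:
  assumes "hamming_eigen (Suc n) q \<mu> f" "a < q" "b < q"
  shows "hamming_eigen n q (\<mu> + 1) (\<lambda>z. f (z(n := a)) - f (z(n := b)))"
  unfolding hamming_eigen_def
proof
  fix y assume y: "y \<in> hamming_vertices n q"
  have "hamming_adj_op n q (\<lambda>z. f (z(n := a)) - f (z(n := b))) y =
      hamming_adj_op n q (\<lambda>z. f (z(n := a))) y - hamming_adj_op n q (\<lambda>z. f (z(n := b))) y"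
    unfolding hamming_adj_op_def by (rule sum_subtractf)
  then show "hamming_adj_op n q (\<lambda>z. f (z(n := a)) - f (z(n := b))) y =
      (\<mu> + 1) * (f (y(n := a)) - f (y(n := b)))"
    using hamming_eigen_slice[OF assms(1) y assms(2)] hamming_eigen_slice[OF assms(1) y assms(3)]
    by (simp add: right_diff_distrib)
qed

lemma hamming_eigen_slice_sum:
  assumes "hamming_eigen (Suc n) q \<mu> f"
  shows "hamming_eigen n q (\<mu> + 1 - real q) (\<lambda>z. \<Sum>b<q. f (z(n := b)))"
  unfolding hamming_eigen_def
proof
  fix y assume y: "y \<in> hamming_vertices n q"
  have "hamming_adj_op n q (\<lambda>z. \<Sum>b<q. f (z(n := b))) y =
      (\<Sum>b<q. hamming_adj_op n q (\<lambda>z. f (z(n := b))) y)"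
    unfolding hamming_adj_op_def by (rule sum.swap)
  also have "\<dots> = (\<Sum>b<q. (\<mu> + 1) * f (y(n := b)) - (\<Sum>b<q. f (y(n := b))))"
    using hamming_eigen_slice[OF assms y] by (intro sum.cong) auto
  also have "\<dots> = (\<mu> + 1) * (\<Sum>b<q. f (y(n := b))) - real q * (\<Sum>b<q. f (y(n := b)))"
    by (simp add: sum_subtractf sum_distrib_left)
  also have "\<dots> = (\<mu> + 1 - real q) * (\<Sum>b<q. f (y(n := b)))"
    by (simp add: left_diff_distrib)
  finally show "hamming_adj_op n q (\<lambda>z. \<Sum>b<q. f (z(n := b))) y =
      (\<mu> + 1 - real q) * (\<Sum>b<q. f (y(n := b)))" .
qed

lemma hamming_eigen_slice_invariant:
  assumes f: "hamming_eigen (Suc n) q \<mu> f" and q: "0 < q"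
    and inv: "\<And>y a. y \<in> hamming_vertices n q \<Longrightarrow> a < q \<Longrightarrow> f (y(n := a)) = f (y(n := 0))"
  shows "hamming_eigen n q (\<mu> + 1 - real q) (\<lambda>z. f (z(n := 0)))"
proof (rule hamming_eigen_cong)
  show "hamming_eigen n q (\<mu> + 1 - real q) (\<lambda>z. 1 / real q * (\<Sum>b<q. f (z(n := b))))"
    using hamming_eigen_slice_sum[OF f] by (rule hamming_eigen_scale)
  show "1 / real q * (\<Sum>b<q. f (z(n := b))) = f (z(n := 0))" if "z \<in> hamming_vertices n q" for z
  proof -
    have "(\<Sum>b<q. f (z(n := b))) = (\<Sum>b<q. f (z(n := 0)))"
      by (intro sum.cong refl inv[OF that]) simp
    then show ?thesis using q by simp
  qed
qed

lemma hamming_eigen_ge_top_const: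
  assumes q: "0 < q"
  shows "hamming_eigen n q \<mu> f \<Longrightarrow> real n * (real q - 1) \<le> \<mu> \<Longrightarrow>
    \<exists>c. (\<forall>x\<in>hamming_vertices n q. f x = c) \<and> (real n * (real q - 1) < \<mu> \<longrightarrow> c = 0)"
proof (induction n arbitrary: \<mu> f)
  case 0
  have "\<mu> * f (\<lambda>_. 0) = 0"
    using 0(1) unfolding hamming_eigen_def hamming_adj_op_def hamming_adj_def
    by (simp add: hamming_vertices_0)
  then show ?case by (auto simp: hamming_vertices_0)
next
  case (Suc n)
  have inv: "f (y(n := a)) = f (y(n := 0))" if "y \<in> hamming_vertices n q" "a < q" for y a
  proof -
    have "real n * (real q - 1) < \<mu> + 1"
      using Suc.prems(2) q by (simp add: algebra_simps)
    then obtain c where "\<forall>z\<in>hamming_vertices n q. f (z(n := a)) - f (z(n := 0)) = c" "c = 0"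
      using Suc.IH[OF hamming_eigen_slice_diff[OF Suc.prems(1) \<open>a < q\<close> q]] by fastforce
    then show ?thesis using that(1) by simp
  qed
  have "real (Suc n) * (real q - 1) = real n * (real q - 1) + real q - 1"
    by (simp add: algebra_simps)
  with Suc.prems(2) obtain c where c: "\<forall>z\<in>hamming_vertices n q. f (z(n := 0)) = c"
    and c0: "real (Suc n) * (real q - 1) < \<mu> \<longrightarrow> c = 0"
    using Suc.IH[OF hamming_eigen_slice_invariant[OF Suc.prems(1) q inv]] by fastforce
  have "f x = c" if "x \<in> hamming_vertices (Suc n) q" for x
    using inv[of "x(n := 0)" "x n"] c[rule_format, of "x(n := 0)"] hamming_vertices_Suc_D[OF that]
    by simp
  with c0 show ?case by blast
qed

lemma hamming_eigen_lambda1_slice_shift: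
  assumes f: "hamming_eigen (Suc n) q (real (Suc n) * (real q - 1) - real q) f" and q: "0 < q"
  shows "\<exists>d. \<forall>a<q. \<forall>y\<in>hamming_vertices n q. f (y(n := a)) = f (y(n := 0)) + d a"
proof -
  have "real (Suc n) * (real q - 1) - real q + 1 = real n * (real q - 1)"
    by (simp add: algebra_simps)
  then have "\<exists>d. \<forall>y\<in>hamming_vertices n q. f (y(n := a)) - f (y(n := 0)) = d" if "a < q" for a
    using hamming_eigen_ge_top_const[OF q hamming_eigen_slice_diff[OF f that q]] by auto
  then show ?thesis
    by (metis add.commute diff_add_cancel)
qed

lemma hamming_eigen_lambda1_coordinate_sum:
  assumes q: "0 < q"
  shows "hamming_eigen n q (real n * (real q - 1) - real q) f \<Longrightarrow>
    \<exists>g. (\<forall>i<n. (\<Sum>a<q. g i a) = 0) \<and>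
        (\<forall>x\<in>hamming_vertices n q. f x = (\<Sum>i<n. g i (x i)))"
proof (induction n arbitrary: f)
  case 0
  then have "\<forall>x\<in>hamming_vertices 0 q. f x = 0"
    using q unfolding hamming_eigen_def hamming_adj_op_def hamming_adj_def by simp
  then show ?case by auto
next
  case (Suc n)
  have \<mu>: "real (Suc n) * (real q - 1) - real q + 1 = real n * (real q - 1)"
    by (simp add: algebra_simps)
  obtain d where d: "\<And>a y. a < q \<Longrightarrow> y \<in> hamming_vertices n q \<Longrightarrow>
      f (y(n := a)) = f (y(n := 0)) + d a"
    using hamming_eigen_lambda1_slice_shift[OF Suc.prems q] by blast
  define S where "S z = (\<Sum>b<q. f (z(n := b)))" for z
  have "hamming_eigen n q (real (Suc n) * (real q - 1) - real q + 1 - real q) S"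
    unfolding S_def by (rule hamming_eigen_slice_sum[OF Suc.prems])
  then have "hamming_eigen n q (real n * (real q - 1) - real q) S"
    unfolding \<mu> .
  then obtain g where g_sum: "\<forall>i<n. (\<Sum>a<q. g i a) = 0"
    and g: "\<forall>y\<in>hamming_vertices n q. S y = (\<Sum>i<n. g i (y i))"
    using Suc.IH by blast
  define D where "D = (\<Sum>a<q. d a)"
  have S: "S y = real q * f (y(n := 0)) + D" if "y \<in> hamming_vertices n q" for y
  proof -
    have "S y = (\<Sum>b<q. f (y(n := 0)) + d b)"
      unfolding S_def by (intro sum.cong refl d[OF _ that]) simp
    then show ?thesis unfolding D_def by (simp add: sum.distrib)
  qed
  define g' where "g' i a = (if i < n then g i a / real q else d a - D / real q)" for i a
  show ?case
  proof (intro exI conjI allI impI ballI)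
    fix i assume "i < Suc n"
    then show "(\<Sum>a<q. g' i a) = 0"
      using g_sum q unfolding g'_def D_def
      by (auto simp: less_Suc_eq sum_subtractf simp flip: sum_divide_distrib)
  next
    fix x assume x: "x \<in> hamming_vertices (Suc n) q"
    let ?y = "x(n := 0)"
    have y: "?y \<in> hamming_vertices n q" and xn: "x n < q"
      using hamming_vertices_Suc_D[OF x] by auto
    have "(\<Sum>i<Suc n. g' i (x i)) = (\<Sum>i<n. g i (?y i)) / real q + (d (x n) - D / real q)"
      unfolding g'_def by (simp add: sum_divide_distrib)
    also have "\<dots> = f ?y + d (x n)"
      using g y S[OF y] q by (simp add: field_simps)
    also have "\<dots> = f x"
      using d[OF xn y] by simp
    finally show "f x = (\<Sum>i<Suc n. g' i (x i))" by simp
  qed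
qed

section \<open>Nonzero entries of the table \<open>u a + v b\<close>\<close>

lemma card_pairs_eq_sum_rows:
  "card {p\<in>{..<q}\<times>{..<q::nat}. P (fst p) (snd p)} = (\<Sum>b<q. card {a\<in>{..<q}. P a b})"
proof -
  have "{p\<in>{..<q}\<times>{..<q}. P (fst p) (snd p)} =
      (\<lambda>(b, a). (a, b)) ` Sigma {..<q} (\<lambda>b. {a\<in>{..<q}. P a b})"
    by auto
  moreover have "inj_on (\<lambda>(b, a). (a, b)) (Sigma {..<q} (\<lambda>b. {a\<in>{..<q}. P a b}))"
    by (auto simp: inj_on_def)
  ultimately show ?thesis by (simp add: card_image card_SigmaI)
qed

lemma card_pairs_eq_sum_cols:
  "card {p\<in>{..<q}\<times>{..<q::nat}. P (fst p) (snd p)} = (\<Sum>a<q. card {b\<in>{..<q}. P a b})"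
proof -
  have "{p\<in>{..<q}\<times>{..<q}. P (fst p) (snd p)} = Sigma {..<q} (\<lambda>a. {b\<in>{..<q}. P a b})"
    by auto
  then show ?thesis by (simp add: card_SigmaI)
qed

definition constant_off_one_point :: "nat \<Rightarrow> (nat \<Rightarrow> 'a) \<Rightarrow> bool" where
  "constant_off_one_point q u \<longleftrightarrow> (\<exists>\<alpha> k. k < q \<and> (\<forall>a<q. a \<noteq> k \<longrightarrow> u a = \<alpha>))"

lemma card_neq_le_1_imp_constant_off_one_point:
  fixes q :: nat
  assumes card: "card {a\<in>{..<q}. u a \<noteq> t} \<le> 1" and q: "0 < q"
  shows "\<exists>k<q. \<forall>a<q. a \<noteq> k \<longrightarrow> u a = t"
proof (cases "{a\<in>{..<q}. u a \<noteq> t} = {}")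
  case True
  then show ?thesis using q by blast
next
  case False
  then obtain k where k: "k \<in> {a\<in>{..<q}. u a \<noteq> t}" by blast
  have "finite {a\<in>{..<q}. u a \<noteq> t}" by simp
  moreover have "card {a\<in>{..<q}. u a \<noteq> t} \<le> Suc 0" using card by simp
  ultimately have "\<forall>a\<in>{a\<in>{..<q}. u a \<noteq> t}. \<forall>b\<in>{a\<in>{..<q}. u a \<noteq> t}. a = b"
    using card_le_Suc0_iff_eq by blast
  with k show ?thesis by blast
qed

lemma card_neq_ge_2_if_not_constant_off_one_point:
  fixes q :: nat
  assumes "\<not> constant_off_one_point q u" and "0 < q"
  shows "2 \<le> card {a\<in>{..<q}. u a \<noteq> t}"
proof (rule ccontr)
  assume "\<not> 2 \<le> card {a\<in>{..<q}. u a \<noteq> t}"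
  then obtain k where "k < q" "\<forall>a<q. a \<noteq> k \<longrightarrow> u a = t"
    using card_neq_le_1_imp_constant_off_one_point[of q u t] assms(2) by auto
  then show False using assms(1) unfolding constant_off_one_point_def by blast
qed

lemma zero_sum_constant_off_one_point:
  fixes u :: "nat \<Rightarrow> real"
  assumes sum: "(\<Sum>a<q. u a) = 0" and nonzero: "\<exists>a<q. u a \<noteq> 0"
    and k: "k < q" and u: "\<forall>a<q. a \<noteq> k \<longrightarrow> u a = \<alpha>"
  shows "u k = - ((real q - 1) * \<alpha>)" and "\<alpha> \<noteq> 0"
proof -
  have "(\<Sum>a<q. u a) = u k + (\<Sum>a\<in>{..<q} - {k}. u a)"
    using k by (subst sum.remove[of _ k]) auto
  also have "\<dots> = u k + (\<Sum>a\<in>{..<q} - {k}. \<alpha>)"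
    using u by (intro arg_cong2[where f = "(+)"] sum.cong) auto
  finally show uk: "u k = - ((real q - 1) * \<alpha>)"
    using sum k by (simp add: of_nat_diff)
  show "\<alpha> \<noteq> 0"
  proof
    assume "\<alpha> = 0"
    then have "u a = 0" if "a < q" for a
      using u uk that by (cases "a = k") auto
    then show False using nonzero by blast
  qed
qed

lemma zero_sum_card_nonzero_ge_2:
  fixes u :: "nat \<Rightarrow> real"
  assumes "(\<Sum>a<q. u a) = 0" and "\<exists>a<q. u a \<noteq> 0"
  shows "2 \<le> card {a\<in>{..<q}. u a \<noteq> 0}"
proof (rule ccontr)
  assume "\<not> 2 \<le> card {a\<in>{..<q}. u a \<noteq> 0}"
  moreover have "0 < q" using assms(2) by auto
  ultimately obtain k where "k < q" "\<forall>a<q. a \<noteq> k \<longrightarrow> u a = 0"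
    using card_neq_le_1_imp_constant_off_one_point[of q u 0] by auto
  then show False using zero_sum_constant_off_one_point(2)[OF assms] by blast
qed

lemma card_neq_constant_off_one_point:
  fixes q :: nat
  assumes k: "k < q" and u: "\<forall>a<q. a \<noteq> k \<longrightarrow> u a = \<alpha>" and "u k \<noteq> \<alpha>"
  shows "card {a\<in>{..<q}. u a \<noteq> t} = (if t = \<alpha> then 1 else if t = u k then q - 1 else q)"
proof -
  have "{a\<in>{..<q}. u a \<noteq> t} =
      (if t = \<alpha> then {k} else if t = u k then {..<q} - {k} else {..<q})"
    using assms by (auto split: if_splits)
  then show ?thesis using k by simp
qed

lemma card_pairs_sum_neq_constant_off_one_point:
  fixes u v :: "nat \<Rightarrow> real" and w :: real
  assumes q: "3 \<le> q"
    and k: "k < q" and u: "\<forall>a<q. a \<noteq> k \<longrightarrow> u a = \<alpha>" and uk: "u k \<noteq> \<alpha>"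
    and m: "m < q" and v: "\<forall>b<q. b \<noteq> m \<longrightarrow> v b = \<gamma>" and vm: "v m \<noteq> \<gamma>"
  defines "N \<equiv> card {p\<in>{..<q}\<times>{..<q}. u (fst p) + v (snd p) \<noteq> w}"
  shows "2 * (q - 1) \<le> N \<and> (N = 2 * (q - 1) \<longrightarrow> \<alpha> + \<gamma> = w \<and> u k + v m = w)"
proof -
  define r where "r t = card {a\<in>{..<q}. u a \<noteq> t}" for t
  have r: "r t = (if t = \<alpha> then 1 else if t = u k then q - 1 else q)" for t
    unfolding r_def by (rule card_neq_constant_off_one_point[OF k u uk])
  have "N = (\<Sum>b<q. card {a\<in>{..<q}. u a + v b \<noteq> w})"
    unfolding N_def by (rule card_pairs_eq_sum_rows)
  also have "\<dots> = (\<Sum>b<q. r (w - v b))"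
    unfolding r_def by (intro sum.cong refl arg_cong[where f = card]) auto
  also have "\<dots> = r (w - v m) + (\<Sum>b\<in>{..<q} - {m}. r (w - v b))"
    using m by (subst sum.remove[of _ m]) auto
  also have "\<dots> = r (w - v m) + (\<Sum>b\<in>{..<q} - {m}. r (w - \<gamma>))"
    using v by (intro arg_cong2[where f = "(+)"] sum.cong) auto
  finally have N: "N = r (w - v m) + (q - 1) * r (w - \<gamma>)"
    using m by simp
  show ?thesis
  proof (cases "w - \<gamma> = \<alpha>")
    case True
    then have "w - v m \<noteq> \<alpha>" using vm by auto
    then show ?thesis using N r True q by auto
  next
    case False
    then have "q - 1 \<le> r (w - \<gamma>)" and "1 \<le> r (w - v m)"
      using r q by auto
    moreover have "(q - 1) * 2 \<le> (q - 1) * (q - 1)"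
      using q by (intro mult_le_mono2) simp
    ultimately have "2 * (q - 1) < N"
      unfolding N using mult_le_mono2[of "q - 1" "r (w - \<gamma>)" "q - 1"] by linarith
    then show ?thesis by simp
  qed
qed

lemma card_pairs_sum_neq_ge_if_not_constant_off_one_point:
  fixes u v :: "nat \<Rightarrow> real" and w :: real
  assumes q: "0 < q" and "\<not> constant_off_one_point q u \<or> \<not> constant_off_one_point q v"
  shows "2 * q \<le> card {p\<in>{..<q}\<times>{..<q}. u (fst p) + v (snd p) \<noteq> w}"
  using assms(2)
proof
  assume "\<not> constant_off_one_point q u"
  have "card {p\<in>{..<q}\<times>{..<q}. u (fst p) + v (snd p) \<noteq> w} =
      (\<Sum>b<q. card {a\<in>{..<q}. u a \<noteq> w - v b})"
    unfolding card_pairs_eq_sum_rows[of q "\<lambda>a b. u a + v b \<noteq> w"]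
    by (intro sum.cong refl arg_cong[where f = card]) auto
  also have "\<dots> \<ge> (\<Sum>b<q. 2)"
    using card_neq_ge_2_if_not_constant_off_one_point[OF \<open>\<not> constant_off_one_point q u\<close> q]
    by (intro sum_mono) auto
  finally show ?thesis by simp
next
  assume "\<not> constant_off_one_point q v"
  have "card {p\<in>{..<q}\<times>{..<q}. u (fst p) + v (snd p) \<noteq> w} =
      (\<Sum>a<q. card {b\<in>{..<q}. v b \<noteq> w - u a})"
    unfolding card_pairs_eq_sum_cols[of q "\<lambda>a b. u a + v b \<noteq> w"]
    by (intro sum.cong refl arg_cong[where f = card]) auto
  also have "\<dots> \<ge> (\<Sum>a<q. 2)"
    using card_neq_ge_2_if_not_constant_off_one_point[OF \<open>\<not> constant_off_one_point q v\<close> q]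
    by (intro sum_mono) auto
  finally show ?thesis by simp
qed

lemma zero_sum_pair_constant_off_one_point_shape:
  fixes u v :: "nat \<Rightarrow> real" and w :: real
  assumes u_sum: "(\<Sum>a<q. u a) = 0" and u_nonzero: "\<exists>a<q. u a \<noteq> 0"
    and k: "k < q" and u: "\<forall>a<q. a \<noteq> k \<longrightarrow> u a = \<alpha>"
    and v_sum: "(\<Sum>b<q. v b) = 0" and v_nonzero: "\<exists>b<q. v b \<noteq> 0"
    and m: "m < q" and v: "\<forall>b<q. b \<noteq> m \<longrightarrow> v b = \<gamma>"
    and sum_w: "\<alpha> + \<gamma> = w" and sum_km: "u k + v m = w"
  shows "w = 0 \<and> (\<exists>c. c \<noteq> 0 \<and>
    (\<forall>a<q. u a = (if a = k then c else 0) - c / real q) \<and>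
    (\<forall>b<q. v b = c / real q - (if b = m then c else 0)))"
proof -
  note u' = zero_sum_constant_off_one_point[OF u_sum u_nonzero k u]
  note v' = zero_sum_constant_off_one_point[OF v_sum v_nonzero m v]
  have q: "0 < q" using k by simp
  have "w = - ((real q - 1) * (\<alpha> + \<gamma>))"
    unfolding sum_km[symmetric] u'(1) v'(1) by (simp add: algebra_simps)
  then have "real q * w = 0"
    using sum_w by (simp add: algebra_simps)
  then have w: "w = 0" using q by simp
  then have \<gamma>: "\<gamma> = - \<alpha>" using sum_w by simp
  define c where "c = - (real q * \<alpha>)"
  have "c \<noteq> 0" using u'(2) q unfolding c_def by simp
  moreover have "u a = (if a = k then c else 0) - c / real q" if "a < q" for a
    using u u'(1) that q unfolding c_def by (auto simp: field_simps)
  moreover have "v b = c / real q - (if b = m then c else 0)" if "b < q" for b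
    using v v'(1) that q \<gamma> unfolding c_def by (auto simp: field_simps)
  ultimately show ?thesis using w by blast
qed

lemma card_pairs_sum_neq_zero_sum:
  fixes u v :: "nat \<Rightarrow> real" and w :: real
  assumes q: "3 \<le> q"
    and u_sum: "(\<Sum>a<q. u a) = 0" and u_nonzero: "\<exists>a<q. u a \<noteq> 0"
    and v_sum: "(\<Sum>b<q. v b) = 0" and v_nonzero: "\<exists>b<q. v b \<noteq> 0"
  defines "N \<equiv> card {p\<in>{..<q}\<times>{..<q}. u (fst p) + v (snd p) \<noteq> w}"
  shows "2 * (q - 1) \<le> N \<and> (N = 2 * (q - 1) \<longrightarrow> w = 0 \<and> (\<exists>k<q. \<exists>m<q. \<exists>c. c \<noteq> 0 \<and>
    (\<forall>a<q. u a = (if a = k then c else 0) - c / real q) \<and>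
    (\<forall>b<q. v b = c / real q - (if b = m then c else 0))))"
proof (cases "constant_off_one_point q u \<and> constant_off_one_point q v")
  case False
  then have "2 * q \<le> N"
    unfolding N_def using q by (intro card_pairs_sum_neq_ge_if_not_constant_off_one_point) auto
  then have "2 * (q - 1) < N" using q by linarith
  then show ?thesis by simp
next
  case True
  then obtain \<alpha> k \<gamma> m where k: "k < q" and u: "\<forall>a<q. a \<noteq> k \<longrightarrow> u a = \<alpha>"
    and m: "m < q" and v: "\<forall>b<q. b \<noteq> m \<longrightarrow> v b = \<gamma>"
    unfolding constant_off_one_point_def by blast
  note u' = zero_sum_constant_off_one_point[OF u_sum u_nonzero k u]
  note v' = zero_sum_constant_off_one_point[OF v_sum v_nonzero m v]
  have "u k \<noteq> \<alpha>" and "v m \<noteq> \<gamma>"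
    using u' v' k by (auto simp: algebra_simps)
  then show ?thesis
    using card_pairs_sum_neq_constant_off_one_point[OF q k u _ m v, of w, folded N_def]
      zero_sum_pair_constant_off_one_point_shape[OF u_sum u_nonzero k u v_sum v_nonzero m v] k m
    by blast
qed

section \<open>Supports of sums of coordinate functions\<close>

lemma card_hamming_vertices_filter_two_coordinates:
  assumes ij: "i < n" "j < n" "i \<noteq> j"
  shows "card {x\<in>hamming_vertices n q. P x} =
    (\<Sum>z\<in>{z\<in>hamming_vertices n q. z i = 0 \<and> z j = 0}.
       card {p\<in>{..<q}\<times>{..<q}. P (z(i := fst p, j := snd p))})"
proof -
  let ?B = "{z\<in>hamming_vertices n q. z i = 0 \<and> z j = 0}"
  let ?S = "Sigma ?B (\<lambda>z. {p\<in>{..<q}\<times>{..<q}. P (z(i := fst p, j := snd p))})"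
  define \<phi> where "\<phi> = (\<lambda>(z :: nat \<Rightarrow> nat, p :: nat \<times> nat). z(i := fst p, j := snd p))"
  have "{x\<in>hamming_vertices n q. P x} = \<phi> ` ?S"
  proof (intro equalityI subsetI)
    fix x assume x: "x \<in> {x\<in>hamming_vertices n q. P x}"
    have "x = \<phi> (x(i := 0, j := 0), (x i, x j))"
      unfolding \<phi>_def using ij by auto
    moreover have "(x(i := 0, j := 0), (x i, x j)) \<in> ?S"
      using x ij unfolding mem_hamming_vertices by auto
    ultimately show "x \<in> \<phi> ` ?S" by blast
  qed (use ij in \<open>auto simp: \<phi>_def mem_hamming_vertices\<close>)
  moreover have "inj_on \<phi> ?S"
  proof (rule inj_onI, clarsimp simp: \<phi>_def)
    fix z a b z' a' b'
    assume z: "z \<in> hamming_vertices n q" "z i = 0" "z j = 0"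
      and z': "z' \<in> hamming_vertices n q" "z' i = 0" "z' j = 0"
      and eq: "z(i := a, j := b) = z'(i := a', j := b')"
    have "z k = z' k" for k
      using fun_cong[OF eq, of k] z z' by (cases "k = i"; cases "k = j") auto
    then show "z = z' \<and> a = a' \<and> b = b'"
      using fun_cong[OF eq, of i] fun_cong[OF eq, of j] ij by auto
  qed
  ultimately have "card {x\<in>hamming_vertices n q. P x} = card ?S"
    by (simp add: card_image)
  also have "\<dots> = (\<Sum>z\<in>?B. card {p\<in>{..<q}\<times>{..<q}. P (z(i := fst p, j := snd p))})"
    using finite_hamming_vertices by (intro card_SigmaI) auto
  finally show ?thesis .
qed

lemma card_hamming_vertices_two_coordinates_zero:
  assumes ij: "i < n" "j < n" "i \<noteq> j" and q: "0 < q"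
  shows "card {z\<in>hamming_vertices n q. z i = 0 \<and> z j = 0} = q ^ (n - 2)"
proof -
  have "n - 2 + 2 = n" using ij by linarith
  then have "q ^ (n - 2) * (q * q) = q ^ n"
    by (metis power_add power2_eq_square)
  also have "\<dots> = card {x\<in>hamming_vertices n q. True}"
    by (simp add: card_hamming_vertices)
  also have "\<dots> = card {z\<in>hamming_vertices n q. z i = 0 \<and> z j = 0} * (q * q)"
    using card_hamming_vertices_filter_two_coordinates[OF ij, of q "\<lambda>_. True"]
    by (simp add: card_cartesian_product)
  finally show ?thesis using q by simp
qed

lemma card_hamming_vertices_filter_coordinate:
  assumes i: "i < n" and n: "2 \<le> n" and q: "0 < q"
  shows "card {x\<in>hamming_vertices n q. P (x i)} = q ^ (n - 1) * card {a\<in>{..<q}. P a}"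
proof -
  define j where "j = (if i = 0 then 1 else 0 :: nat)"
  have ij: "i < n" "j < n" "i \<noteq> j"
    using i n unfolding j_def by auto
  have "card {x\<in>hamming_vertices n q. P (x i)} =
      (\<Sum>z\<in>{z\<in>hamming_vertices n q. z i = 0 \<and> z j = 0}. q * card {a\<in>{..<q}. P a})"
    using card_hamming_vertices_filter_two_coordinates[OF ij, of q "\<lambda>x. P (x i)"] ij
      card_pairs_eq_sum_rows[of q "\<lambda>a b. P a"]
    by simp
  also have "\<dots> = q ^ (n - 2) * q * card {a\<in>{..<q}. P a}"
    by (simp add: card_hamming_vertices_two_coordinates_zero[OF ij q])
  also have "q ^ (n - 2) * q = q ^ (n - 1)"
  proof -
    have "n - 1 = Suc (n - 2)" using n by linarith
    then show ?thesis by (simp add: mult.commute)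
  qed
  finally show ?thesis .
qed

lemma card_support_eq_sum_planes:
  fixes u v :: "nat \<Rightarrow> real" and h f :: "(nat \<Rightarrow> nat) \<Rightarrow> real"
  assumes ij: "i < n" "j < n" "i \<noteq> j"
    and f: "\<forall>x\<in>hamming_vertices n q. f x = u (x i) + v (x j) + h (x(i := 0, j := 0))"
  shows "card {x\<in>hamming_vertices n q. f x \<noteq> 0} =
    (\<Sum>z\<in>{z\<in>hamming_vertices n q. z i = 0 \<and> z j = 0}.
       card {p\<in>{..<q}\<times>{..<q}. u (fst p) + v (snd p) \<noteq> - h z})"
proof (rule trans[OF card_hamming_vertices_filter_two_coordinates[OF ij]],
    intro sum.cong refl arg_cong[where f = card] Collect_cong)
  fix z p assume z: "z \<in> {z\<in>hamming_vertices n q. z i = 0 \<and> z j = 0}"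
  show "(p \<in> {..<q}\<times>{..<q} \<and> f (z(i := fst p, j := snd p)) \<noteq> 0) \<longleftrightarrow>
      (p \<in> {..<q}\<times>{..<q} \<and> u (fst p) + v (snd p) \<noteq> - h z)"
  proof (cases "p \<in> {..<q}\<times>{..<q}")
    case True
    then have "z(i := fst p, j := snd p) \<in> hamming_vertices n q"
      using z ij unfolding mem_hamming_vertices by auto
    moreover have "(z(i := fst p, j := snd p))(i := 0, j := 0) = z"
      using z by auto
    ultimately have "f (z(i := fst p, j := snd p)) = u (fst p) + v (snd p) + h z"
      using f ij by force
    then show ?thesis by auto
  qed simp
qed

lemma card_support_two_coordinates:
  fixes u v :: "nat \<Rightarrow> real" and h f :: "(nat \<Rightarrow> nat) \<Rightarrow> real"
  assumes ij: "i < n" "j < n" "i \<noteq> j" and q: "3 \<le> q"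
    and u_sum: "(\<Sum>a<q. u a) = 0" and u_nonzero: "\<exists>a<q. u a \<noteq> 0"
    and v_sum: "(\<Sum>b<q. v b) = 0" and v_nonzero: "\<exists>b<q. v b \<noteq> 0"
    and f: "\<forall>x\<in>hamming_vertices n q. f x = u (x i) + v (x j) + h (x(i := 0, j := 0))"
  shows "2 * (q - 1) * q ^ (n - 2) \<le> card {x\<in>hamming_vertices n q. f x \<noteq> 0} \<and>
    (card {x\<in>hamming_vertices n q. f x \<noteq> 0} = 2 * (q - 1) * q ^ (n - 2) \<longrightarrow>
      (\<exists>k<q. \<exists>m<q. \<exists>c. c \<noteq> 0 \<and> (\<forall>x\<in>hamming_vertices n q.
        f x = (if x i = k then c else 0) - (if x j = m then c else 0))))"
proof -
  let ?B = "{z\<in>hamming_vertices n q. z i = 0 \<and> z j = 0}"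
  define N where "N z = card {p\<in>{..<q}\<times>{..<q}. u (fst p) + v (snd p) \<noteq> - h z}" for z
  note pairs = card_pairs_sum_neq_zero_sum[OF q u_sum u_nonzero v_sum v_nonzero]
  have card_support: "card {x\<in>hamming_vertices n q. f x \<noteq> 0} = (\<Sum>z\<in>?B. N z)"
    unfolding N_def by (rule card_support_eq_sum_planes[OF ij f])
  have bound: "(\<Sum>z\<in>?B. 2 * (q - 1)) = 2 * (q - 1) * q ^ (n - 2)"
    using card_hamming_vertices_two_coordinates_zero[OF ij] q by simp
  have N_ge: "2 * (q - 1) \<le> N z" for z
    using pairs unfolding N_def by blast
  have "2 * (q - 1) * q ^ (n - 2) \<le> card {x\<in>hamming_vertices n q. f x \<noteq> 0}"
    unfolding card_support bound[symmetric] using N_ge by (rule sum_mono)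
  moreover have "\<exists>k<q. \<exists>m<q. \<exists>c. c \<noteq> 0 \<and> (\<forall>x\<in>hamming_vertices n q.
      f x = (if x i = k then c else 0) - (if x j = m then c else 0))"
    if eq: "card {x\<in>hamming_vertices n q. f x \<noteq> 0} = 2 * (q - 1) * q ^ (n - 2)"
  proof -
    have "(\<Sum>z\<in>?B. 2 * (q - 1)) = (\<Sum>z\<in>?B. N z)"
      using card_support bound eq by simp
    then have N_eq: "N z = 2 * (q - 1)" if "z \<in> ?B" for z
      using sum_mono_inv[OF _ N_ge that] finite_hamming_vertices by simp
    have h: "h z = 0" if "z \<in> ?B" for z
      using pairs[of "- h z"] N_eq[OF that, unfolded N_def] by simp
    have "(\<lambda>_. 0) \<in> ?B"
      using q unfolding mem_hamming_vertices by simp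
    then obtain k m c where "k < q" "m < q" "c \<noteq> 0"
      and u: "\<forall>a<q. u a = (if a = k then c else 0) - c / real q"
      and v: "\<forall>b<q. v b = c / real q - (if b = m then c else 0)"
      using pairs[of "- h (\<lambda>_. 0)"] N_eq[unfolded N_def] by blast
    moreover have "f x = (if x i = k then c else 0) - (if x j = m then c else 0)"
      if "x \<in> hamming_vertices n q" for x
    proof -
      have "x i < q" "x j < q" and "x(i := 0, j := 0) \<in> ?B"
        using that ij unfolding mem_hamming_vertices by auto
      then show ?thesis
        using f that h u v by simp
    qed
    ultimately show ?thesis by blast
  qed
  ultimately show ?thesis by blast
qed

lemma sum_coordinates_fun_upd_two:
  fixes g :: "nat \<Rightarrow> 'b \<Rightarrow> 'a::ab_group_add"
  assumes ij: "i < n" "j < n" "i \<noteq> j"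
  shows "(\<Sum>k<n. g k (x k)) =
    g i (x i) + g j (x j) + ((\<Sum>k<n. g k ((x(i := a, j := b)) k)) - g i a - g j b)"
proof -
  let ?y = "x(i := a, j := b)"
  have "(\<Sum>k<n. g k (x k) - g k (?y k)) = (\<Sum>k\<in>{i, j}. g k (x k) - g k (?y k))"
    using ij by (intro sum.mono_neutral_right) auto
  then have "(\<Sum>k<n. g k (x k)) - (\<Sum>k<n. g k (?y k)) = g i (x i) - g i a + (g j (x j) - g j b)"
    using ij by (simp add: sum_subtractf)
  then show ?thesis by (simp add: algebra_simps)
qed

lemma coordinate_sum_nonzero_imp_ex_nonzero_component:
  fixes g :: "nat \<Rightarrow> nat \<Rightarrow> real" and f :: "(nat \<Rightarrow> nat) \<Rightarrow> real"
  assumes f: "\<forall>x\<in>hamming_vertices n q. f x = (\<Sum>i<n. g i (x i))"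
    and nonzero: "\<exists>x\<in>hamming_vertices n q. f x \<noteq> 0"
  shows "\<exists>i<n. \<exists>a<q. g i a \<noteq> 0"
proof (rule ccontr)
  assume all_zero: "\<not> (\<exists>i<n. \<exists>a<q. g i a \<noteq> 0)"
  have "f x = 0" if x: "x \<in> hamming_vertices n q" for x
  proof -
    have "f x = (\<Sum>i<n. g i (x i))" using f x by blast
    also have "\<dots> = 0"
      using all_zero x unfolding mem_hamming_vertices by (intro sum.neutral) auto
    finally show ?thesis .
  qed
  then show False using nonzero by blast
qed

lemma card_support_one_coordinate:
  fixes u :: "nat \<Rightarrow> real" and f :: "(nat \<Rightarrow> nat) \<Rightarrow> real"
  assumes i: "i < n" and n: "2 \<le> n"
    and u_sum: "(\<Sum>a<q. u a) = 0" and u_nonzero: "\<exists>a<q. u a \<noteq> 0"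
    and f: "\<forall>x\<in>hamming_vertices n q. f x = u (x i)"
  shows "2 * (q - 1) * q ^ (n - 2) < card {x\<in>hamming_vertices n q. f x \<noteq> 0}"
proof -
  have q: "0 < q" using u_nonzero by auto
  have "card {x\<in>hamming_vertices n q. f x \<noteq> 0} = card {x\<in>hamming_vertices n q. u (x i) \<noteq> 0}"
    using f by (intro arg_cong[where f = card]) auto
  also have "\<dots> = q ^ (n - 1) * card {a\<in>{..<q}. u a \<noteq> 0}"
    by (rule card_hamming_vertices_filter_coordinate[OF i n q])
  finally have "q ^ (n - 1) * 2 \<le> card {x\<in>hamming_vertices n q. f x \<noteq> 0}"
    using zero_sum_card_nonzero_ge_2[OF u_sum u_nonzero] by simp
  moreover have "q ^ (n - 1) = q * q ^ (n - 2)"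
  proof -
    have "n - 1 = Suc (n - 2)" using n by linarith
    then show ?thesis by simp
  qed
  moreover have "(q - 1) * q ^ (n - 2) < q * q ^ (n - 2)"
    using q by (intro mult_strict_right_mono) auto
  ultimately show ?thesis by linarith
qed

lemma card_support_coordinate_sum:
  fixes g :: "nat \<Rightarrow> nat \<Rightarrow> real" and f :: "(nat \<Rightarrow> nat) \<Rightarrow> real"
  assumes q: "3 \<le> q" and n: "2 \<le> n"
    and g_sum: "\<forall>i<n. (\<Sum>a<q. g i a) = 0"
    and f: "\<forall>x\<in>hamming_vertices n q. f x = (\<Sum>i<n. g i (x i))"
    and nonzero: "\<exists>x\<in>hamming_vertices n q. f x \<noteq> 0"
  shows "2 * (q - 1) * q ^ (n - 2) \<le> card {x\<in>hamming_vertices n q. f x \<noteq> 0} \<and>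
    (card {x\<in>hamming_vertices n q. f x \<noteq> 0} = 2 * (q - 1) * q ^ (n - 2) \<longrightarrow>
      (\<exists>i<n. \<exists>j<n. i \<noteq> j \<and> (\<exists>k<q. \<exists>m<q. \<exists>c. c \<noteq> 0 \<and> (\<forall>x\<in>hamming_vertices n q.
        f x = (if x i = k then c else 0) - (if x j = m then c else 0)))))"
proof -
  obtain i where i: "i < n" and gi: "\<exists>a<q. g i a \<noteq> 0"
    using coordinate_sum_nonzero_imp_ex_nonzero_component[OF f nonzero] by blast
  show ?thesis
  proof (cases "\<exists>j<n. j \<noteq> i \<and> (\<exists>b<q. g j b \<noteq> 0)")
    case True
    then obtain j where j: "j < n" "i \<noteq> j" and gj: "\<exists>b<q. g j b \<noteq> 0"
      by blast
    define h where "h z = (\<Sum>k<n. g k (z k)) - g i 0 - g j 0" for z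
    have "\<forall>x\<in>hamming_vertices n q. f x = g i (x i) + g j (x j) + h (x(i := 0, j := 0))"
      using f sum_coordinates_fun_upd_two[OF i j, of g _ 0 0] unfolding h_def by metis
    from card_support_two_coordinates[OF i j q g_sum[rule_format, OF i] gi
        g_sum[rule_format, OF j(1)] gj this]
    show ?thesis using i j by blast
  next
    case False
    have "f x = g i (x i)" if "x \<in> hamming_vertices n q" for x
    proof -
      have "(\<Sum>k<n. g k (x k)) = (\<Sum>k\<in>{i}. g k (x k))"
        using False that i unfolding mem_hamming_vertices by (intro sum.mono_neutral_right) auto
      then show ?thesis using f that by simp
    qed
    then have "2 * (q - 1) * q ^ (n - 2) < card {x\<in>hamming_vertices n q. f x \<noteq> 0}"
      by (intro card_support_one_coordinate[OF i n g_sum[rule_format, OF i] gi]) blast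
    then show ?thesis by simp
  qed
qed

lemma T_set_difference_eq_indicators:
  fixes c :: real
  assumes "x \<in> hamming_vertices n q"
  shows "(if x \<in> T_set q k i n - T_set q m j n then c
          else if x \<in> T_set q m j n - T_set q k i n then - c else 0) =
    (if x i = k then c else 0) - (if x j = m then c else 0)"
  using assms by (auto simp: T_set_def)

theorem theorem3:
  fixes n q :: nat and f :: "(nat \<Rightarrow> nat) \<Rightarrow> real"
  assumes "q > 2" and "n \<ge> 2"
    and nonzero: "\<exists>x\<in>hamming_vertices n q. f x \<noteq> 0"
    and eigen: "\<forall>x\<in>hamming_vertices n q.
                  hamming_adj_op n q f x = (real n * (real q - 1) - real q) * f x"
  shows "card (support_H n q f) \<ge> 2 * (q - 1) * q ^ (n - 2) \<and>
         (card (support_H n q f) = 2 * (q - 1) * q ^ (n - 2) \<longrightarrow>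
         (\<exists>i<n. \<exists>j<n. i \<noteq> j \<and> (\<exists>k<q. \<exists>m<q. \<exists>c::real. c \<noteq> 0 \<and>
            (\<forall>x\<in>hamming_vertices n q.
               f x = (if x \<in> T_set q k i n - T_set q m j n then c
                      else if x \<in> T_set q m j n - T_set q k i n then - c
                      else 0)))))"
proof -
  have q: "3 \<le> q" using \<open>q > 2\<close> by simp
  obtain g where g_sum: "\<forall>i<n. (\<Sum>a<q. g i a) = 0"
    and f: "\<forall>x\<in>hamming_vertices n q. f x = (\<Sum>i<n. g i (x i))"
    using hamming_eigen_lambda1_coordinate_sum[of q n f] q eigen unfolding hamming_eigen_def by auto
  show ?thesis
    using card_support_coordinate_sum[OF q \<open>n \<ge> 2\<close> g_sum f nonzero]
    unfolding support_H_def by (simp only: T_set_difference_eq_indicators cong: ball_cong) blast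
qed

end
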